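(* The algorithm $K_2$ for the $2$-cache problem is a knowledge state algorithm (that is, each specified adjustment satisfies the required inequality $(\omega\wedge r)(x)\ge\mathrm{adjust}+\sum_i\lambda_i\omega_i(x)$ for all configurations $x$), and the function $\Phi$ defined by $\Phi(A^{a,b})=0$ and $\Phi(B^{a,b,c})=\tfrac12$ is a $\tfrac32$-ks-potential for $K_2$.
   Context: The $k$-cache problem: there is an infinite set $P$ of pages; the state set $\mathcal X$ is the set of $k$-element subsets of $P$ (cache contents), with a given initial cache $s^0$; the requests are the pages, $\mathcal R=P$; $d(x,y)=|x\setminus y|$; and $\mathrm{cost}(x,r,y)=2$ if $x=y$ and $r\notin x$; $\mathrm{cost}(x,r,y)=d(x,y)$ if $r\in x$ or $r\in y$; $\mathrm{cost}(x,r,y)=d(x,y)+1$ otherwise. $\Pi$ is the set of finitely supported probability distributions on $\mathcal X$; for $\pi,\pi'\in\Pi$, $\mathrm{cost}(\pi,r,\pi')$ is the minimum of $\sum_{x,y}\gamma(x,y)\mathrm{cost}(x,r,y)$ over distributions $\gamma$ on $\mathrm{supp}(\pi)\times\mathrm{supp}(\pi')$ with marginals $\pi,\pi'$. An estimator is a function $\omega:\mathcal X\to[0,\infty)$ with $\omega(y)\le\omega(x)+d(x,y)$; the update operator is $(\omega\wedge r)(y)=\inf_{x}\{\omega(x)+\mathrm{cost}(x,r,y)\}$. Bar notation: a string $\alpha$ of distinct page names and exactly $k$ bars, with at least $i$ page names to the left of the $i$-th bar, denotes the estimator $\omega_\alpha(y)=\min_{x\in S_\alpha}d(x,y)$, where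 $S_\alpha$ is the set of configurations $x$ such that for each $i=1,\dots,k$ at least $i$ elements of $x$ are written to the left of the $i$-th bar. E.g. for $k=2$, $ab||=d(\{a,b\},\cdot)$ and $a|bc|$ has $S=\{\{a,b\},\{a,c\}\}$. Knowledge state algorithm: a knowledge state is a pair $(\pi,\omega)$, $\pi\in\Pi$, $\omega$ an estimator; the initial one is $(s^0,\omega^0)$ with $\omega^0(s^0)=0$. For each knowledge state $k=(\pi,\omega)$ and request $r$ the algorithm specifies subsequent knowledge states $k_i=(\pi_i,\omega_i)$ with weights $\lambda_i>0$ summing to $1$ (the next state is $k_i$ with probability $\lambda_i$) and a real number $\mathrm{adjust}(k,r)$, required to satisfy $(\omega\wedge r)(x)\ge\mathrm{adjust}(k,r)+\sum_i\lambda_i\omega_i(x)$ for all $x$. Step cost $\mathrm{cost}(k,r)=\mathrm{cost}(\pi,r,\sum_i\lambda_i\pi_i)$. A $C$-ks-potential is a function $\Phi\ge0$ on knowledge states such that for every knowledge state $k$ and request $r$: $\mathrm{cost}(k,r)+\sum_i\lambda_i\Phi(k_i)-\Phi(k)\le C\cdot\mathrm{adjust}(k,r)$. Algorithm $K_2$ ($k=2$; $a,b,c,d$ always denote distinct pages). Knowledge states: $A^{a,b}=(\{a,b\},\ ab||)$ (point mass on $\{a,b\}$; $A^{a,b}=A^{b,a}$), and $B^{a,b,c}=(\tfrac12\{a,b\}+\tfrac12\{a,c\},\ a|bc|)$ (so $B^{a,b,c}=B^{a,c,b}$). Initial state $A^{a,b}$ where $s^0=\{a,b\}$. Transitions: from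 $A^{a,b}$: request $a$ or $b$: stay in $A^{a,b}$, adjust $0$; request $c\notin\{a,b\}$: go to $B^{c,a,b}$, adjust $1$. From $B^{a,b,c}$: request $a$: stay, adjust $0$; request $b$: go to $A^{b,a}$, adjust $0$; request $c$: go to $A^{c,a}$, adjust $0$; request $d\notin\{a,b,c\}$: go to each of $A^{d,a},A^{d,b},A^{d,c}$ with probability $\tfrac13$, adjust $\tfrac13$. *)

theory Defs
  imports Complex_Main
begin

definition configs :: "nat \<Rightarrow> 'p set set" where
  "configs k = {x. finite x \<and> card x = k}"

definition dist_cfg :: "'p set \<Rightarrow> 'p set \<Rightarrow> real" where
  "dist_cfg x y = real (card (x - y))"

definition cost_cfg :: "'p set \<Rightarrow> 'p \<Rightarrow> 'p set \<Rightarrow> real" where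
  "cost_cfg x r y =
     (if x = y \<and> r \<notin> x then 2
      else if r \<in> x \<or> r \<in> y then dist_cfg x y
      else dist_cfg x y + 1)"

text \<open>Finitely supported distributions on configurations, as weight functions.\<close>
definition supp_dist :: "('p set \<Rightarrow> real) \<Rightarrow> 'p set set" where
  "supp_dist \<pi> = {x. \<pi> x \<noteq> 0}"

definition couplings :: "('p set \<Rightarrow> real) \<Rightarrow> ('p set \<Rightarrow> real) \<Rightarrow> ('p set \<times> 'p set \<Rightarrow> real) set" where
  "couplings \<pi> \<pi>' = {\<gamma>.
      (\<forall>x\<in>supp_dist \<pi>. \<forall>y\<in>supp_dist \<pi>'. \<gamma> (x, y) \<ge> 0) \<and>
      (\<forall>x\<in>supp_dist \<pi>. (\<Sum>y\<in>supp_dist \<pi>'. \<gamma> (x, y)) = \<pi> x) \<and>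
      (\<forall>y\<in>supp_dist \<pi>'. (\<Sum>x\<in>supp_dist \<pi>. \<gamma> (x, y)) = \<pi>' y)}"

definition cost_dist :: "('p set \<Rightarrow> real) \<Rightarrow> 'p \<Rightarrow> ('p set \<Rightarrow> real) \<Rightarrow> real" where
  "cost_dist \<pi> r \<pi>' =
     Inf ((\<lambda>\<gamma>. \<Sum>xy\<in>supp_dist \<pi> \<times> supp_dist \<pi>'. \<gamma> xy * cost_cfg (fst xy) r (snd xy))
            ` couplings \<pi> \<pi>')"

definition upd :: "nat \<Rightarrow> ('p set \<Rightarrow> real) \<Rightarrow> 'p \<Rightarrow> 'p set \<Rightarrow> real" where
  "upd k \<omega> r y = (INF x\<in>configs k. \<omega> x + cost_cfg x r y)"

datatype 'p tok = Pg 'p | Bar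

text \<open>Pages written to the left of the i-th bar: those preceded by fewer than i bars.\<close>
definition left_of_bar :: "'p tok list \<Rightarrow> nat \<Rightarrow> 'p set" where
  "left_of_bar \<alpha> i = {p. \<exists>j<length \<alpha>. \<alpha> ! j = Pg p \<and> card {m. m < j \<and> \<alpha> ! m = Bar} < i}"

definition S_bar :: "nat \<Rightarrow> 'p tok list \<Rightarrow> 'p set set" where
  "S_bar k \<alpha> = {x\<in>configs k. \<forall>i\<in>{1..k}. card (x \<inter> left_of_bar \<alpha> i) \<ge> i}"

definition omega_bar :: "nat \<Rightarrow> 'p tok list \<Rightarrow> 'p set \<Rightarrow> real" where
  "omega_bar k \<alpha> y = (INF x\<in>S_bar k \<alpha>. dist_cfg x y)"

datatype 'p ks2 = KA 'p 'p | KB 'p 'p 'p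

fun valid_ks2 :: "'p ks2 \<Rightarrow> bool" where
  "valid_ks2 (KA a b) = (a \<noteq> b)"
| "valid_ks2 (KB a b c) = (a \<noteq> b \<and> a \<noteq> c \<and> b \<noteq> c)"

fun ks2_dist :: "'p ks2 \<Rightarrow> 'p set \<Rightarrow> real" where
  "ks2_dist (KA a b) = (\<lambda>x. if x = {a, b} then 1 else 0)"
| "ks2_dist (KB a b c) = (\<lambda>x. (if x = {a, b} then 1/2 else 0) + (if x = {a, c} then 1/2 else 0))"

fun ks2_est :: "'p ks2 \<Rightarrow> 'p set \<Rightarrow> real" where
  "ks2_est (KA a b) = omega_bar 2 [Pg a, Pg b, Bar, Bar]"
| "ks2_est (KB a b c) = omega_bar 2 [Pg a, Bar, Pg b, Pg c, Bar]"

text \<open>Transitions: list of (probability, successor state).\<close>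
fun K2_trans :: "'p ks2 \<Rightarrow> 'p \<Rightarrow> (real \<times> 'p ks2) list" where
  "K2_trans (KA a b) r = (if r = a \<or> r = b then [(1, KA a b)] else [(1, KB r a b)])"
| "K2_trans (KB a b c) r =
     (if r = a then [(1, KB a b c)]
      else if r = b then [(1, KA b a)]
      else if r = c then [(1, KA c a)]
      else [(1/3, KA r a), (1/3, KA r b), (1/3, KA r c)])"

fun K2_adjust :: "'p ks2 \<Rightarrow> 'p \<Rightarrow> real" where
  "K2_adjust (KA a b) r = (if r = a \<or> r = b then 0 else 1)"
| "K2_adjust (KB a b c) r = (if r = a \<or> r = b \<or> r = c then 0 else 1/3)"

definition mix_dist :: "(real \<times> 'p ks2) list \<Rightarrow> 'p set \<Rightarrow> real" where
  "mix_dist tr x = (\<Sum>(l, s)\<leftarrow>tr. l * ks2_dist s x)"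

definition K2_cost :: "'p ks2 \<Rightarrow> 'p \<Rightarrow> real" where
  "K2_cost s r = cost_dist (ks2_dist s) r (mix_dist (K2_trans s r))"

fun Phi2 :: "'p ks2 \<Rightarrow> real" where
  "Phi2 (KA a b) = 0"
| "Phi2 (KB a b c) = 1/2"

end

theory Submission
  imports Defs
begin

(* Both estimators are distances to a set S of configurations (S = {ab} for A, S = {ab, ac} for B).
   Hence the updated estimator at x is at least the minimum over s in S of the cheapest cost of
   moving from s to x while serving r, which is d(s, x), plus one (and at least 2) when r lies in
   neither s nor x.  The adjustment inequalities then reduce to a case analysis on which of the at
   most four named pages lie in the 2-configuration x.  For the potential, explicit couplings bound
   the step cost by 0 and 1 from A, and by 0, 1/2, 1/2 and 1 from B; the inequality is then
   arithmetic. *)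

lemma card_bars_Cons:
  "card {m. m < Suc j \<and> (t # \<alpha>) ! m = Bar}
     = (if t = Bar then 1 else 0) + card {m. m < j \<and> \<alpha> ! m = Bar}"
proof -
  let ?B = "{m. m < j \<and> \<alpha> ! m = Bar}"
  have "{m. m < Suc j \<and> (t # \<alpha>) ! m = Bar} = (if t = Bar then insert 0 (Suc ` ?B) else Suc ` ?B)"
  proof (rule set_eqI)
    fix m
    show "m \<in> {m. m < Suc j \<and> (t # \<alpha>) ! m = Bar}
            \<longleftrightarrow> m \<in> (if t = Bar then insert 0 (Suc ` ?B) else Suc ` ?B)"
      by (cases m) auto
  qed
  then show ?thesis by (simp add: card_image)
qed

lemma mem_left_of_bar_Cons:
  "p \<in> left_of_bar (t # \<alpha>) i \<longleftrightarrow> t = Pg p \<and> 0 < i \<or>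
     (\<exists>j<length \<alpha>. \<alpha> ! j = Pg p \<and> (if t = Bar then 1 else 0) + card {m. m < j \<and> \<alpha> ! m = Bar} < i)"
  unfolding left_of_bar_def
  by (simp only: mem_Collect_eq length_Cons Ex_less_Suc2 nth_Cons_0 nth_Cons_Suc card_bars_Cons) simp

lemma left_of_bar_Nil [simp]: "left_of_bar [] i = {}"
  by (simp add: left_of_bar_def)

lemma left_of_bar_Pg [simp]:
  "left_of_bar (Pg p # \<alpha>) i = (if i = 0 then {} else insert p (left_of_bar \<alpha> i))"
  by (rule set_eqI, simp only: mem_left_of_bar_Cons) (auto simp: left_of_bar_def)

lemma left_of_bar_Bar [simp]: "left_of_bar (Bar # \<alpha>) i = left_of_bar \<alpha> (i - 1)"
  by (rule set_eqI, simp only: mem_left_of_bar_Cons) (auto simp: left_of_bar_def)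

lemma configs_2_iff: "x \<in> configs 2 \<longleftrightarrow> (\<exists>p q. p \<noteq> q \<and> x = {p, q})"
  by (auto simp: configs_def card_2_iff)

lemma card_Int_ge_card_iff: "finite x \<Longrightarrow> card x \<le> card (x \<inter> L) \<longleftrightarrow> x \<subseteq> L"
  by (metis Int_lower1 Int_absorb2 card_mono card_subset_eq inf.absorb_iff1 le_antisym order_refl)

lemma S_bar_2_iff:
  "x \<in> S_bar 2 \<alpha> \<longleftrightarrow> x \<in> configs 2 \<and> x \<inter> left_of_bar \<alpha> 1 \<noteq> {} \<and> x \<subseteq> left_of_bar \<alpha> 2"
proof -
  have one_two: "(\<forall>i\<in>{1..2::nat}. P i) \<longleftrightarrow> P 1 \<and> P 2" for P
    by (auto simp: le_Suc_eq numeral_eq_Suc)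
  have "x \<in> configs 2 \<Longrightarrow> 1 \<le> card (x \<inter> L) \<longleftrightarrow> x \<inter> L \<noteq> {}" for L
    by (simp add: configs_def Suc_le_eq card_gt_0_iff)
  moreover have "x \<in> configs 2 \<Longrightarrow> 2 \<le> card (x \<inter> L) \<longleftrightarrow> x \<subseteq> L" for L
    using card_Int_ge_card_iff[of x L] by (simp add: configs_def)
  ultimately show ?thesis
    unfolding S_bar_def mem_Collect_eq one_two by blast
qed

lemma S_bar_KA: "a \<noteq> b \<Longrightarrow> S_bar 2 [Pg a, Pg b, Bar, Bar] = {{a, b}}"
  by (auto simp: S_bar_2_iff configs_2_iff) blast+

lemma S_bar_KB:
  "a \<noteq> b \<Longrightarrow> a \<noteq> c \<Longrightarrow> b \<noteq> c \<Longrightarrow> S_bar 2 [Pg a, Bar, Pg b, Pg c, Bar] = {{a, b}, {a, c}}"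
  by (auto simp: S_bar_2_iff configs_2_iff) blast+

lemma ks2_est_KA: "a \<noteq> b \<Longrightarrow> ks2_est (KA a b) y = dist_cfg {a, b} y"
  by (simp add: omega_bar_def S_bar_KA)

lemma ks2_est_KB:
  "a \<noteq> b \<Longrightarrow> a \<noteq> c \<Longrightarrow> b \<noteq> c \<Longrightarrow>
     ks2_est (KB a b c) y = min (dist_cfg {a, b} y) (dist_cfg {a, c} y)"
  by (simp add: omega_bar_def S_bar_KB cInf_insert inf_min)

declare ks2_est.simps [simp del]

lemma dist_cfg_nonneg: "0 \<le> dist_cfg x y"
  by (simp add: dist_cfg_def)

lemma dist_cfg_triangle:
  assumes "finite x" "finite y"
  shows "dist_cfg x z \<le> dist_cfg x y + dist_cfg y z"
proof -
  have "card (x - z) \<le> card ((x - y) \<union> (y - z))"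
    by (rule card_mono) (use assms in auto)
  also have "\<dots> \<le> card (x - y) + card (y - z)"
    by (rule card_Un_le)
  finally show ?thesis
    unfolding dist_cfg_def by linarith
qed

lemma dist_cfg_ge_1:
  assumes "x \<in> configs k" "y \<in> configs k" "x \<noteq> y"
  shows "1 \<le> dist_cfg x y"
proof -
  have "\<not> x \<subseteq> y"
    using assms card_subset_eq[of y x] by (auto simp: configs_def)
  then have "x - y \<noteq> {}" by blast
  then show ?thesis
    using assms(1) by (simp add: configs_def dist_cfg_def Suc_le_eq card_gt_0_iff)
qed

lemma dist_cfg_pair:
  "p \<noteq> q \<Longrightarrow> finite y \<Longrightarrow> dist_cfg {p, q} y = (if p \<in> y then 0 else 1) + (if q \<in> y then 0 else 1)"
  by (auto simp: dist_cfg_def insert_Diff_if)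

lemma cost_cfg_ge_dist: "dist_cfg x y \<le> cost_cfg x r y"
  by (auto simp: cost_cfg_def dist_cfg_def)

lemma cost_cfg_nonneg: "0 \<le> cost_cfg x r y"
  using cost_cfg_ge_dist[of x y r] dist_cfg_nonneg[of x y] by linarith

(* A request outside both s and x must be fetched and evicted again on the way. *)
definition serve_cost :: "'p set \<Rightarrow> 'p \<Rightarrow> 'p set \<Rightarrow> real" where
  "serve_cost s r x = (if r \<in> s \<or> r \<in> x then dist_cfg s x else max (dist_cfg s x + 1) 2)"

lemma serve_cost_nonneg: "0 \<le> serve_cost s r x"
  by (simp add: serve_cost_def dist_cfg_nonneg le_max_iff_disj)

lemma serve_cost_le:
  assumes s: "s \<in> configs k" and z: "z \<in> configs k" and x: "x \<in> configs k"
  shows "serve_cost s r x \<le> dist_cfg s z + cost_cfg z r x"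
proof -
  have fin: "finite s" "finite z"
    using s z by (simp_all add: configs_def)
  consider "r \<in> s \<or> r \<in> x" | "r \<notin> s" "r \<notin> x" "r \<in> z" | "r \<notin> s" "r \<notin> x" "r \<notin> z" "z = x"
    | "r \<notin> s" "r \<notin> x" "r \<notin> z" "z \<noteq> x"
    by blast
  then show ?thesis
  proof cases
    case 1
    then show ?thesis
      using dist_cfg_triangle[OF fin, of x] cost_cfg_ge_dist[of z x r] by (simp add: serve_cost_def)
  next
    case 2
    have "card (s - x) \<le> card ((s - z) \<union> ((s \<inter> z) - x))"
      by (rule card_mono) (use fin in auto)
    also have "\<dots> \<le> card (s - z) + card ((s \<inter> z) - x)"
      by (rule card_Un_le)
    finally have "card (s - x) \<le> card (s - z) + card ((s \<inter> z) - x)" .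
    moreover have "card (insert r ((s \<inter> z) - x)) \<le> card (z - x)"
      by (rule card_mono) (use fin 2 in auto)
    moreover have "card (insert r ((s \<inter> z) - x)) = card ((s \<inter> z) - x) + 1"
      using fin 2 by simp
    ultimately have "dist_cfg s x + 1 \<le> dist_cfg s z + dist_cfg z x"
      unfolding dist_cfg_def by linarith
    moreover have "1 \<le> dist_cfg s z" "1 \<le> dist_cfg z x"
      using dist_cfg_ge_1[OF s z] dist_cfg_ge_1[OF z x] 2 by auto
    moreover have "cost_cfg z r x = dist_cfg z x"
      using 2 by (auto simp: cost_cfg_def)
    ultimately show ?thesis
      using 2 by (simp add: serve_cost_def)
  next
    case 3
    then show ?thesis
      using dist_cfg_nonneg[of s x] by (simp add: serve_cost_def cost_cfg_def)
  next
    case 4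
    then show ?thesis
      using dist_cfg_ge_1[OF z x] dist_cfg_triangle[OF fin, of x] dist_cfg_nonneg[of s z]
      by (simp add: serve_cost_def cost_cfg_def)
  qed
qed

lemma upd_omega_bar_ge:
  assumes ne: "S_bar k \<alpha> \<noteq> {}" and x: "x \<in> configs k"
  shows "(INF s\<in>S_bar k \<alpha>. serve_cost s r x) \<le> upd k (omega_bar k \<alpha>) r x"
proof -
  define m where "m = (INF s\<in>S_bar k \<alpha>. serve_cost s r x)"
  have bdd: "bdd_below ((\<lambda>s. serve_cost s r x) ` S_bar k \<alpha>)"
    by (rule bdd_belowI2[of _ 0]) (rule serve_cost_nonneg)
  have "m - cost_cfg z r x \<le> omega_bar k \<alpha> z" if z: "z \<in> configs k" for z
    unfolding omega_bar_def
  proof (rule cINF_greatest[OF ne])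
    fix s assume s: "s \<in> S_bar k \<alpha>"
    have "m \<le> serve_cost s r x"
      unfolding m_def by (rule cINF_lower[OF bdd s])
    also have "\<dots> \<le> dist_cfg s z + cost_cfg z r x"
      using s z x unfolding S_bar_def by (blast intro: serve_cost_le)
    finally show "m - cost_cfg z r x \<le> dist_cfg s z"
      by linarith
  qed
  then have "m \<le> omega_bar k \<alpha> z + cost_cfg z r x" if "z \<in> configs k" for z
    using that by force
  then show ?thesis
    unfolding upd_def m_def[symmetric] using x by (blast intro: cINF_greatest)
qed

lemma upd_ks2_est_KA_ge:
  "a \<noteq> b \<Longrightarrow> x \<in> configs 2 \<Longrightarrow> serve_cost {a, b} r x \<le> upd 2 (ks2_est (KA a b)) r x"
  using upd_omega_bar_ge[of 2 "[Pg a, Pg b, Bar, Bar]" x r] by (simp add: ks2_est.simps S_bar_KA)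

lemma upd_ks2_est_KB_ge:
  "a \<noteq> b \<Longrightarrow> a \<noteq> c \<Longrightarrow> b \<noteq> c \<Longrightarrow> x \<in> configs 2 \<Longrightarrow>
     min (serve_cost {a, b} r x) (serve_cost {a, c} r x) \<le> upd 2 (ks2_est (KB a b c)) r x"
  using upd_omega_bar_ge[of 2 "[Pg a, Bar, Pg b, Pg c, Bar]" x r]
  by (simp add: ks2_est.simps S_bar_KB cInf_insert inf_min)

lemma config_2_no_three:
  "x \<in> configs 2 \<Longrightarrow> p \<noteq> q \<Longrightarrow> p \<noteq> w \<Longrightarrow> q \<noteq> w \<Longrightarrow> \<not> (p \<in> x \<and> q \<in> x \<and> w \<in> x)"
  by (auto simp: configs_2_iff)

lemma K2_adjust_KA_le:
  assumes ab: "a \<noteq> b" and x: "x \<in> configs 2"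
  shows "K2_adjust (KA a b) r + (\<Sum>(l, s')\<leftarrow>K2_trans (KA a b) r. l * ks2_est s' x)
           \<le> serve_cost {a, b} r x"
proof (cases "r = a \<or> r = b")
  case True
  then show ?thesis
    using ab by (auto simp: ks2_est_KA serve_cost_def)
next
  case False
  have "finite x"
    using x by (simp add: configs_def)
  then show ?thesis
    using False ab config_2_no_three[OF x, of r a b]
    by (cases "r \<in> x"; cases "a \<in> x"; cases "b \<in> x")
       (simp_all add: ks2_est_KB serve_cost_def dist_cfg_pair)
qed

lemma K2_adjust_KB_le:
  assumes abc: "a \<noteq> b" "a \<noteq> c" "b \<noteq> c" and x: "x \<in> configs 2"
  shows "K2_adjust (KB a b c) r + (\<Sum>(l, s')\<leftarrow>K2_trans (KB a b c) r. l * ks2_est s' x)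
           \<le> min (serve_cost {a, b} r x) (serve_cost {a, c} r x)"
proof -
  have "finite x"
    using x by (simp add: configs_def)
  moreover have "\<not> (p \<in> x \<and> q \<in> x \<and> w \<in> x)" if "distinct [p, q, w]" for p q w
    using config_2_no_three[OF x, of p q w] that by simp
  ultimately show ?thesis
    using abc
    by (cases "r \<in> x"; cases "a \<in> x"; cases "b \<in> x"; cases "c \<in> x")
       (auto simp: ks2_est_KA ks2_est_KB serve_cost_def dist_cfg_pair insert_commute)
qed

lemma cost_dist_le_coupling:
  assumes \<gamma>: "\<gamma> \<in> couplings \<pi> \<pi>'"
  shows "cost_dist \<pi> r \<pi>' \<le> (\<Sum>x\<in>supp_dist \<pi>. \<Sum>y\<in>supp_dist \<pi>'. \<gamma> (x, y) * cost_cfg x r y)"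
proof -
  let ?F = "\<lambda>\<gamma>. \<Sum>xy\<in>supp_dist \<pi> \<times> supp_dist \<pi>'. \<gamma> xy * cost_cfg (fst xy) r (snd xy)"
  have "bdd_below (?F ` couplings \<pi> \<pi>')"
  proof (rule bdd_belowI2[of _ 0], rule sum_nonneg)
    fix g xy assume "g \<in> couplings \<pi> \<pi>'" "xy \<in> supp_dist \<pi> \<times> supp_dist \<pi>'"
    then have "0 \<le> g xy"
      unfolding couplings_def by (cases xy) auto
    then show "0 \<le> g xy * cost_cfg (fst xy) r (snd xy)"
      by (simp add: cost_cfg_nonneg)
  qed
  then have "cost_dist \<pi> r \<pi>' \<le> ?F \<gamma>"
    unfolding cost_dist_def using \<gamma> by (rule cINF_lower)
  then show ?thesis
    by (simp add: sum.cartesian_product case_prod_beta)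
qed

lemma supp_dist_KA: "supp_dist (ks2_dist (KA a b)) = {{a, b}}"
  by (auto simp: supp_dist_def)

lemma supp_dist_KB: "b \<noteq> c \<Longrightarrow> supp_dist (ks2_dist (KB a b c)) = {{a, b}, {a, c}}"
  by (auto simp: supp_dist_def doubleton_eq_iff)

lemma mix_dist_single: "mix_dist [(1, s)] = ks2_dist s"
  by (simp add: mix_dist_def fun_eq_iff)

lemma K2_cost_KA_le:
  assumes ab: "a \<noteq> b"
  shows "K2_cost (KA a b) r \<le> K2_adjust (KA a b) r"
proof (cases "r = a \<or> r = b")
  case True
  let ?\<gamma> = "\<lambda>_ :: 'a set \<times> 'a set. 1 :: real"
  have "?\<gamma> \<in> couplings (ks2_dist (KA a b)) (ks2_dist (KA a b))"
    unfolding couplings_def supp_dist_KA by simp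
  from cost_dist_le_coupling[OF this, of r] show ?thesis
    using True ab unfolding K2_cost_def supp_dist_KA
    by (auto simp: mix_dist_single cost_cfg_def dist_cfg_def)
next
  case False
  let ?\<gamma> = "\<lambda>_ :: 'a set \<times> 'a set. 1/2 :: real"
  have "?\<gamma> \<in> couplings (ks2_dist (KA a b)) (ks2_dist (KB r a b))"
    unfolding couplings_def supp_dist_KA supp_dist_KB[OF ab]
    using False ab by (simp add: doubleton_eq_iff)
  from cost_dist_le_coupling[OF this, of r] show ?thesis
    using False ab unfolding K2_cost_def supp_dist_KA supp_dist_KB[OF ab]
    by (auto simp: mix_dist_single doubleton_eq_iff cost_cfg_def dist_cfg_pair)
qed

lemma K2_cost_KB_le:
  assumes abc: "a \<noteq> b" "a \<noteq> c" "b \<noteq> c"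
  shows "K2_cost (KB a b c) r \<le> (if r = a then 0 else if r = b \<or> r = c then 1/2 else 1)"
proof -
  note supp = supp_dist_KA supp_dist_KB[OF abc(3)]
  consider "r = a" | "r = b" | "r = c" | "r \<noteq> a" "r \<noteq> b" "r \<noteq> c"
    by blast
  then show ?thesis
  proof cases
    case 1
    let ?\<gamma> = "\<lambda>xy :: 'a set \<times> 'a set. if fst xy = snd xy then 1/2 else 0 :: real"
    have "?\<gamma> \<in> couplings (ks2_dist (KB a b c)) (ks2_dist (KB a b c))"
      unfolding couplings_def supp using abc by (simp add: doubleton_eq_iff)
    from cost_dist_le_coupling[OF this, of a] show ?thesis
      using 1 abc unfolding K2_cost_def supp
      by (auto simp: mix_dist_single doubleton_eq_iff cost_cfg_def dist_cfg_def)
  next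
    case 2
    let ?\<gamma> = "\<lambda>_ :: 'a set \<times> 'a set. 1/2 :: real"
    have "?\<gamma> \<in> couplings (ks2_dist (KB a b c)) (ks2_dist (KA b a))"
      unfolding couplings_def supp using abc by (simp add: doubleton_eq_iff)
    from cost_dist_le_coupling[OF this, of b] show ?thesis
      using 2 abc unfolding K2_cost_def supp
      by (auto simp: mix_dist_single doubleton_eq_iff cost_cfg_def dist_cfg_pair)
  next
    case 3
    let ?\<gamma> = "\<lambda>_ :: 'a set \<times> 'a set. 1/2 :: real"
    have "?\<gamma> \<in> couplings (ks2_dist (KB a b c)) (ks2_dist (KA c a))"
      unfolding couplings_def supp using abc by (simp add: doubleton_eq_iff)
    from cost_dist_le_coupling[OF this, of c] show ?thesis
      using 3 abc unfolding K2_cost_def supp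
      by (auto simp: mix_dist_single doubleton_eq_iff cost_cfg_def dist_cfg_pair)
  next
    case 4
    define \<pi>' where "\<pi>' = mix_dist (K2_trans (KB a b c) r)"
    have \<pi>': "\<pi>' y = (if y = {r, a} then 1/3 else 0) + (if y = {r, b} then 1/3 else 0)
                + (if y = {r, c} then 1/3 else 0)" for y
      using 4 by (simp add: \<pi>'_def mix_dist_def)
    have supp': "supp_dist \<pi>' = {{r, a}, {r, b}, {r, c}}"
      unfolding supp_dist_def \<pi>' using 4 abc by (auto simp: doubleton_eq_iff)
    \<comment> \<open>Sources are matched only with targets sharing a page, so every matched pair costs 1.\<close>
    let ?\<gamma> = "\<lambda>xy :: 'a set \<times> 'a set.
       if xy = ({a, b}, {r, a}) \<or> xy = ({a, c}, {r, a}) then 1/6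
       else if xy = ({a, b}, {r, b}) \<or> xy = ({a, c}, {r, c}) then 1/3 else 0 :: real"
    have "?\<gamma> \<in> couplings (ks2_dist (KB a b c)) \<pi>'"
      unfolding couplings_def supp supp' using 4 abc by (simp add: doubleton_eq_iff \<pi>')
    from cost_dist_le_coupling[OF this, of r] show ?thesis
      using 4 abc unfolding K2_cost_def \<pi>'_def[symmetric] supp supp'
      by (simp add: doubleton_eq_iff cost_cfg_def dist_cfg_pair)
  qed
qed

lemma K2_adjust_sound:
  assumes "valid_ks2 s" and x: "x \<in> configs 2"
  shows "K2_adjust s r + (\<Sum>(l, s')\<leftarrow>K2_trans s r. l * ks2_est s' x) \<le> upd 2 (ks2_est s) r x"
proof (cases s)
  case (KA a b)
  then have ab: "a \<noteq> b"
    using assms by simp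
  show ?thesis
    using K2_adjust_KA_le[OF ab x] upd_ks2_est_KA_ge[OF ab x] unfolding KA by (rule order_trans)
next
  case (KB a b c)
  then have abc: "a \<noteq> b" "a \<noteq> c" "b \<noteq> c"
    using assms by auto
  show ?thesis
    using K2_adjust_KB_le[OF abc x] upd_ks2_est_KB_ge[OF abc x] unfolding KB by (rule order_trans)
qed

lemma K2_potential_step:
  assumes "valid_ks2 s"
  shows "K2_cost s r + (\<Sum>(l, s')\<leftarrow>K2_trans s r. l * Phi2 s') - Phi2 s \<le> 3/2 * K2_adjust s r"
proof (cases s)
  case (KA a b)
  then show ?thesis
    using assms K2_cost_KA_le[of a b r] by auto
next
  case (KB a b c)
  then show ?thesis
    using assms K2_cost_KB_le[of a b c r] by auto
qed

theorem mainTheorem9: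
  assumes "infinite (UNIV :: 'p set)"
  shows "(\<forall>(s :: 'p ks2) r. valid_ks2 s \<longrightarrow>
            (\<forall>x\<in>configs 2. upd 2 (ks2_est s) r x
                \<ge> K2_adjust s r + (\<Sum>(l, s')\<leftarrow>K2_trans s r. l * ks2_est s' x)))
       \<and> (\<forall>s :: 'p ks2. valid_ks2 s \<longrightarrow> Phi2 s \<ge> 0)
       \<and> (\<forall>(s :: 'p ks2) r. valid_ks2 s \<longrightarrow>
            K2_cost s r + (\<Sum>(l, s')\<leftarrow>K2_trans s r. l * Phi2 s') - Phi2 s
              \<le> 3/2 * K2_adjust s r)"
proof (intro conjI allI impI ballI)
  fix s :: "'p ks2" and r :: 'p and x :: "'p set"
  assume "valid_ks2 s" "x \<in> configs 2"
  then show "K2_adjust s r + (\<Sum>(l, s')\<leftarrow>K2_trans s r. l * ks2_est s' x) \<le> upd 2 (ks2_est s) r x"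
    by (rule K2_adjust_sound)
next
  fix s :: "'p ks2"
  show "0 \<le> Phi2 s"
    by (cases s) simp_all
next
  fix s :: "'p ks2" and r :: 'p
  assume "valid_ks2 s"
  then show "K2_cost s r + (\<Sum>(l, s')\<leftarrow>K2_trans s r. l * Phi2 s') - Phi2 s \<le> 3/2 * K2_adjust s r"
    by (rule K2_potential_step)
qed

end
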